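(* Let $t,m,n$ be positive integers, $V=\mathbb{C}^t$, $W=\mathbb{C}^{m+n}$, and let $\Omega_{ij}$, $E_{ij}$, $\kappa_{ij}$ ($1\le i,j\le m+n$) be the operators on $\Lambda^{\bullet}(V\otimes W)$ defined in the context. Fix a $\mathfrak{gl}_t$-weight $\alpha$ and a $\mathfrak{gl}_{m+n}$-weight $\beta=(\beta_1,\dots,\beta_{m+n})$, and let $M_{\alpha,\beta}\subset\Lambda^{\bullet}(V\otimes W)$ be the subspace of vectors of $\mathfrak{gl}_t$-weight $\alpha$ and $\mathfrak{gl}_{m+n}$-weight $\beta$ (so $E_{ii}$ acts on it by $\beta_i$). Let $\hbar\in\mathbb{C}$ and $U=\{z\in\mathbb{C}^{m+n}: z_i\neq z_j \text{ for } i\ne j\}$. Then a (local holomorphic) function $f:U\to M_{\alpha,\beta}$ is a flat section of $$\nabla_{KZ}=d-\hbar\sum_{1\le i<j\le m+n}\frac{dz_i-dz_j}{z_i-z_j}\Omega_{ij}$$ if and only if $g=f\cdot\prod_{1\le i<j\le m+n}(z_i-z_j)^{-(\beta_i+\beta_j)\hbar/2}$ is a flat section of $$\nabla_\kappa=d+\frac{\hbar}{2}\sum_{1\le i<j\le m+n}\frac{dz_i-dz_j}{z_i-z_j}\kappa_{ij}.$$ Moreover, with $h=\exp\big(\frac{\hbar}{2}\sum_{1\le i<j\le m+n}(\beta_i-\beta_j)\log(z_i-z_j)\big)$, the gauge transform $h\nabla_\kappa h^{-1}$ on $M_{\alpha,\beta}$ equals the dynamical connection $$\nabla_D=d+\hbar\sum_{1\le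 i<j\le m+n}\frac{dz_i-dz_j}{z_i-z_j}E_{ji}E_{ij}.$$
   Context: $V$ has standard basis $v_1,\dots,v_t$, $W$ has standard basis $w_1,\dots,w_{m+n}$, $x_{a,i}=v_a\otimes w_i$. On $\Lambda^{\bullet}(V\otimes W)$, $x_{a,i}$ is left multiplication and $\partial_{a,i}$ is the odd derivation with $\partial_{a,i}(x_{b,j})=\delta_{ab}\delta_{ij}$. Define $\Omega_{ij}=\sum_{a,b=1}^t x_{a,i}\partial_{b,i}x_{b,j}\partial_{a,j}$ (the $\mathfrak{gl}_t$ Casimir acting in the $i$-th and $j$-th factors of $\Lambda^{\bullet}(V\otimes W)\cong\bigotimes_i\Lambda^{\bullet}(V\otimes w_i)$), $E_{ij}=\sum_{a=1}^t x_{a,i}\partial_{a,j}$ (the action of $\mathfrak{gl}_{m+n}$), and $\kappa_{ij}=E_{ij}E_{ji}+E_{ji}E_{ij}$. The $\mathfrak{gl}_t$-action is $E_{ab}\mapsto\sum_i x_{a,i}\partial_{b,i}$; weights are with respect to diagonal matrices. *)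

theory Defs
  imports "HOL-Analysis.Analysis"
begin

text \<open>The standard basis of V is indexed by a finite linearly
ordered type 'a (so t = CARD('a)), the standard basis of W by a finite linearly
ordered type 'n (so m + n = CARD('n)); the order plays the role of 1 < 2 < ... .
The basis vectors x_(a,i) = v_a (x) w_i of V (x) W are indexed by 'a \<times> 'n, and the
exterior algebra Lambda(V (x) W) is realised as complex ^ (('a \<times> 'n) set): the
coordinate at S is the coefficient of the ordered wedge product of the x_p, p in S,
taken in increasing (lexicographic) order.\<close>

type_synonym ('a, 'n) ext = "complex ^ (('a \<times> 'n) set)"

definition lexless :: "('a::linorder \<times> 'n::linorder) \<Rightarrow> 'a \<times> 'n \<Rightarrow> bool" where
  "lexless q p \<longleftrightarrow> fst q < fst p \<or> (fst q = fst p \<and> snd q < snd p)"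

definition wsign :: "('a::linorder \<times> 'n::linorder) set \<Rightarrow> 'a \<times> 'n \<Rightarrow> complex" where
  "wsign S p = (-1) ^ card {q \<in> S. lexless q p}"

text \<open>left multiplication by x_p\<close>
definition xop :: "('a::{finite,linorder} \<times> 'n::{finite,linorder}) \<Rightarrow> ('a, 'n) ext \<Rightarrow> ('a, 'n) ext" where
  "xop p v = (\<chi> S. if p \<in> S then wsign S p * v $ (S - {p}) else 0)"

text \<open>the odd derivation d/dx_p with d_p(x_q) = delta_pq\<close>
definition dop :: "('a::{finite,linorder} \<times> 'n::{finite,linorder}) \<Rightarrow> ('a, 'n) ext \<Rightarrow> ('a, 'n) ext" where
  "dop p v = (\<chi> S. if p \<notin> S then wsign S p * v $ (insert p S) else 0)"

definition Omega :: "'n \<Rightarrow> 'n \<Rightarrow> ('a::{finite,linorder}, 'n::{finite,linorder}) ext \<Rightarrow> ('a, 'n) ext" where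
  "Omega i j v = (\<Sum>a\<in>UNIV. \<Sum>b\<in>UNIV. xop (a,i) (dop (b,i) (xop (b,j) (dop (a,j) v))))"

definition Eop :: "'n \<Rightarrow> 'n \<Rightarrow> ('a::{finite,linorder}, 'n::{finite,linorder}) ext \<Rightarrow> ('a, 'n) ext" where
  "Eop i j v = (\<Sum>a\<in>UNIV. xop (a,i) (dop (a,j) v))"

text \<open>gl_t action: E_ab \<mapsto> sum_i x_{a,i} d_{b,i}\<close>
definition Etop :: "'a \<Rightarrow> 'a \<Rightarrow> ('a::{finite,linorder}, 'n::{finite,linorder}) ext \<Rightarrow> ('a, 'n) ext" where
  "Etop a b v = (\<Sum>i\<in>UNIV. xop (a,i) (dop (b,i) v))"

definition kappa :: "'n \<Rightarrow> 'n \<Rightarrow> ('a::{finite,linorder}, 'n::{finite,linorder}) ext \<Rightarrow> ('a, 'n) ext" where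
  "kappa i j v = Eop i j (Eop j i v) + Eop j i (Eop i j v)"

definition Mwt :: "('a::{finite,linorder} \<Rightarrow> complex) \<Rightarrow> ('n::{finite,linorder} \<Rightarrow> complex) \<Rightarrow> ('a, 'n) ext set" where
  "Mwt \<alpha> \<beta> = {v. (\<forall>a. Etop a a v = \<alpha> a *s v) \<and> (\<forall>i. Eop i i v = \<beta> i *s v)}"

definition Uconf :: "(complex ^ 'n) set" where
  "Uconf = {z. \<forall>i j. i \<noteq> j \<longrightarrow> z $ i \<noteq> z $ j}"

definition holo_on :: "(complex ^ 'n) set \<Rightarrow> (complex ^ 'n \<Rightarrow> complex ^ 'k) \<Rightarrow> bool" where
  "holo_on D s \<longleftrightarrow> (\<forall>z\<in>D. \<exists>L. (s has_derivative L) (at z) \<and> (\<forall>c h. L (c *s h) = c *s L h))"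

text \<open>A connection d + sum_k omega_k(z) dz_k is given by its coefficients omega k z.
cov_deriv gives the dz_k-component of nabla s (for holomorphic s).\<close>
definition cov_deriv ::
  "('n \<Rightarrow> complex ^ 'n \<Rightarrow> complex ^ 'k \<Rightarrow> complex ^ 'k) \<Rightarrow> (complex ^ 'n \<Rightarrow> complex ^ 'k)
     \<Rightarrow> complex ^ 'n \<Rightarrow> 'n \<Rightarrow> complex ^ 'k" where
  "cov_deriv \<omega> s z k = frechet_derivative s (at z) (axis k 1) + \<omega> k z (s z)"

definition flat_on ::
  "(complex ^ 'n) set \<Rightarrow> ('n \<Rightarrow> complex ^ 'n \<Rightarrow> complex ^ 'k \<Rightarrow> complex ^ 'k) \<Rightarrow> (complex ^ 'n \<Rightarrow> complex ^ 'k) \<Rightarrow> bool" where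
  "flat_on D \<omega> s \<longleftrightarrow> (\<forall>z\<in>D. \<forall>k. cov_deriv \<omega> s z k = 0)"

text \<open>dz_k-coefficient of (dz_i - dz_j)/(z_i - z_j)\<close>
definition dlogc :: "'n \<Rightarrow> 'n \<Rightarrow> 'n \<Rightarrow> complex ^ 'n \<Rightarrow> complex" where
  "dlogc k i j z = ((if k = i then 1 else 0) - (if k = j then 1 else 0)) / (z $ i - z $ j)"

definition omegaKZ :: "complex \<Rightarrow> 'n::{finite,linorder} \<Rightarrow> complex ^ 'n::{finite,linorder} \<Rightarrow> ('a::{finite,linorder}, 'n::{finite,linorder}) ext \<Rightarrow> ('a::{finite,linorder}, 'n::{finite,linorder}) ext" where
  "omegaKZ \<h> k z v = - (\<h> *s (\<Sum>(i,j)\<in>{p. fst p < snd p}. dlogc k i j z *s Omega i j v))"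

definition omegaKappa :: "complex \<Rightarrow> 'n::{finite,linorder} \<Rightarrow> complex ^ 'n::{finite,linorder} \<Rightarrow> ('a::{finite,linorder}, 'n::{finite,linorder}) ext \<Rightarrow> ('a::{finite,linorder}, 'n::{finite,linorder}) ext" where
  "omegaKappa \<h> k z v = (\<h> / 2) *s (\<Sum>(i,j)\<in>{p. fst p < snd p}. dlogc k i j z *s kappa i j v)"

definition omegaDyn :: "complex \<Rightarrow> 'n::{finite,linorder} \<Rightarrow> complex ^ 'n::{finite,linorder} \<Rightarrow> ('a::{finite,linorder}, 'n::{finite,linorder}) ext \<Rightarrow> ('a::{finite,linorder}, 'n::{finite,linorder}) ext" where
  "omegaDyn \<h> k z v = \<h> *s (\<Sum>(i,j)\<in>{p. fst p < snd p}. dlogc k i j z *s Eop j i (Eop i j v))"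

end

theory Submission
  imports Defs
begin

text \<open>The Clifford relations x_p d_q + d_q x_p = delta_pq turn Omega_ij (i \<noteq> j) into the
normal-ordered quartic N_ij = sum_(a,b) x_(a,i) x_(b,j) d_(a,j) d_(b,i), and E_ij E_ji into
E_ii - N_ij, where N_ij = N_ji.  Hence on M_(alpha,beta)
  kappa_ij = (beta_i + beta_j) - 2 Omega_ij = (beta_i - beta_j) + 2 E_ji E_ij,
so the three connections differ by scalar forms sum c_ij dlog(z_i - z_j).  Multiplying
a section by exp (sum gamma_ij log(z_i - z_j)) adds exactly sum gamma_ij dlog(z_i - z_j)
to the connection, and the exponents in the theorem are chosen to cancel these scalar
differences.\<close>

section \<open>Clifford relations\<close>

lemma lexless_irrefl [simp]: "\<not> lexless p p"
  by (simp add: lexless_def)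

lemma lexless_sign_swap:
  "p \<noteq> q \<Longrightarrow> (if lexless q p then -1 else 1) = - (if lexless p q then -1 else (1::complex))"
  by (cases p; cases q) (auto simp: lexless_def)

lemma wsign_insert:
  fixes S :: "('a::{finite,linorder} \<times> 'n::{finite,linorder}) set"
  assumes "p \<notin> S"
  shows "wsign (insert p S) q = (if lexless p q then -1 else 1) * wsign S q"
proof (cases "lexless p q")
  case True
  then have "{r \<in> insert p S. lexless r q} = insert p {r \<in> S. lexless r q}"
    by auto
  then show ?thesis
    using assms True by (simp add: wsign_def)
next
  case False
  then have "{r \<in> insert p S. lexless r q} = {r \<in> S. lexless r q}"
    by auto
  then show ?thesis
    using False by (simp add: wsign_def)
qed

lemma wsign_remove:
  fixes S :: "('a::{finite,linorder} \<times> 'n::{finite,linorder}) set"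
  assumes "p \<in> S"
  shows "wsign S q = (if lexless p q then -1 else 1) * wsign (S - {p}) q"
  using wsign_insert[of p "S - {p}" q] assms by (simp add: insert_absorb)

lemma wsign_insert_self [simp]: "wsign (insert p S) p = wsign S p"
  and wsign_remove_self [simp]: "wsign (S - {p}) p = wsign S p"
proof -
  have "{r \<in> insert p S. lexless r p} = {r \<in> S. lexless r p}"
    and "{r \<in> S - {p}. lexless r p} = {r \<in> S. lexless r p}"
    by auto
  then show "wsign (insert p S) p = wsign S p" and "wsign (S - {p}) p = wsign S p"
    by (simp_all add: wsign_def)
qed

lemma wsign_mult_self [simp]: "wsign S p * wsign S p = 1"
  by (simp add: wsign_def flip: power_add)

lemma xop_dop_anticommute_same: "xop p (dop p v) + dop p (xop p v) = v"
proof (subst vec_eq_iff, intro allI)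
  fix S
  show "(xop p (dop p v) + dop p (xop p v)) $ S = v $ S"
    by (cases "p \<in> S") (simp_all add: xop_def dop_def insert_absorb mult.assoc[symmetric])
qed

lemma xop_dop_anticommute:
  assumes pq: "p \<noteq> q"
  shows "xop p (dop q v) + dop q (xop p v) = 0"
proof (subst vec_eq_iff, intro allI)
  fix S
  show "(xop p (dop q v) + dop q (xop p v)) $ S = 0 $ S"
  proof (cases "p \<in> S \<and> q \<notin> S")
    case True
    have "insert q S - {p} = insert q (S - {p})"
      using pq by auto
    then have "(xop p (dop q v) + dop q (xop p v)) $ S
        = wsign S p * wsign (S - {p}) q * v $ insert q (S - {p})
          * (1 + (if lexless p q then -1 else 1) * (if lexless q p then -1 else 1))"
      using True pq
      by (simp add: xop_def dop_def wsign_remove[of p S q] wsign_insert[of q S p] algebra_simps)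
    then show ?thesis
      using lexless_sign_swap[OF pq] by simp
  next
    case False
    then show ?thesis
      using pq by (auto simp: xop_def dop_def)
  qed
qed

lemma xop_anticommute:
  assumes pq: "p \<noteq> q"
  shows "xop p (xop q v) = - xop q (xop p v)"
proof (subst vec_eq_iff, intro allI)
  fix S
  show "xop p (xop q v) $ S = (- xop q (xop p v)) $ S"
  proof (cases "p \<in> S \<and> q \<in> S")
    case True
    have "S - {q} - {p} = S - {p} - {q}" by auto
    then have "xop p (xop q v) $ S + xop q (xop p v) $ S
        = wsign (S - {q}) p * wsign (S - {p}) q * v $ (S - {p} - {q})
          * ((if lexless q p then -1 else 1) + (if lexless p q then -1 else 1))"
      using True pq
      by (simp add: xop_def wsign_remove[of p S q] wsign_remove[of q S p] algebra_simps)
    then show ?thesis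
      using lexless_sign_swap[OF pq] by (simp add: eq_neg_iff_add_eq_0)
  next
    case False
    then show ?thesis
      using pq by (auto simp: xop_def)
  qed
qed

lemma dop_anticommute:
  assumes pq: "p \<noteq> q"
  shows "dop p (dop q v) = - dop q (dop p v)"
proof (subst vec_eq_iff, intro allI)
  fix S
  show "dop p (dop q v) $ S = (- dop q (dop p v)) $ S"
  proof (cases "p \<notin> S \<and> q \<notin> S")
    case True
    have "dop p (dop q v) $ S + dop q (dop p v) $ S
        = wsign S p * wsign S q * v $ insert p (insert q S)
          * ((if lexless q p then -1 else 1) + (if lexless p q then -1 else 1))"
      using True pq
      by (simp add: dop_def wsign_insert[of p S q] wsign_insert[of q S p] insert_commute algebra_simps)
    then show ?thesis
      using lexless_sign_swap[OF pq] by (simp add: eq_neg_iff_add_eq_0)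
  next
    case False
    then show ?thesis
      using pq by (auto simp: dop_def)
  qed
qed

lemma xop_add: "xop p (u + v) = xop p u + xop p v"
  by (simp add: vec_eq_iff xop_def algebra_simps)
lemma dop_add: "dop p (u + v) = dop p u + dop p v"
  by (simp add: vec_eq_iff dop_def algebra_simps)
lemma xop_diff: "xop p (u - v) = xop p u - xop p v"
  by (simp add: vec_eq_iff xop_def algebra_simps)
lemma dop_diff: "dop p (u - v) = dop p u - dop p v"
  by (simp add: vec_eq_iff dop_def algebra_simps)
lemma xop_minus: "xop p (- v) = - xop p v"
  by (simp add: vec_eq_iff xop_def)
lemma dop_minus: "dop p (- v) = - dop p v"
  by (simp add: vec_eq_iff dop_def)
lemma xop_zero: "xop p 0 = 0"
  by (simp add: vec_eq_iff xop_def)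
lemma dop_zero: "dop p 0 = 0"
  by (simp add: vec_eq_iff dop_def)
lemma xop_smult: "xop p (c *s v) = c *s xop p v"
  by (simp add: vec_eq_iff xop_def algebra_simps)
lemma dop_smult: "dop p (c *s v) = c *s dop p v"
  by (simp add: vec_eq_iff dop_def algebra_simps)
lemma xop_sum: "xop p (sum f A) = (\<Sum>a\<in>A. xop p (f a))"
  by (simp add: vec_eq_iff xop_def sum_component sum_distrib_left)
lemma dop_sum: "dop p (sum f A) = (\<Sum>a\<in>A. dop p (f a))"
  by (simp add: vec_eq_iff dop_def sum_component sum_distrib_left)

lemmas xop_dop_linear = xop_add dop_add xop_diff dop_diff xop_minus dop_minus xop_zero dop_zero
  xop_smult dop_smult xop_sum dop_sum

lemma dop_xop: "dop q (xop p v) = (if p = q then v else 0) - xop p (dop q v)"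
  using xop_dop_anticommute_same[of p v] xop_dop_anticommute[of p q v]
  by (auto simp: algebra_simps eq_neg_iff_add_eq_0)

lemma Eop_smult: "Eop i j (c *s v) = c *s Eop i j v"
  by (simp add: Eop_def xop_dop_linear sum_cmul)

lemma kappa_smult: "kappa i j (c *s v) = c *s kappa i j v"
  by (simp add: kappa_def Eop_smult vector_add_ldistrib)

section \<open>Connection forms on a weight space\<close>

definition normal_quartic :: "'n \<Rightarrow> 'n \<Rightarrow> ('a::{finite,linorder}, 'n::{finite,linorder}) ext \<Rightarrow> ('a, 'n) ext" where
  "normal_quartic i j v = (\<Sum>a\<in>UNIV. \<Sum>b\<in>UNIV. xop (a,i) (xop (b,j) (dop (a,j) (dop (b,i) v))))"

lemma Eop_Eop_normal_quartic: "Eop i j (Eop j i v) = Eop i i v - normal_quartic i j v"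
proof -
  have "xop (a,i) (dop (a,j) (xop (b,j) (dop (b,i) v)))
      = (if a = b then xop (a,i) (dop (a,i) v) else 0) - xop (a,i) (xop (b,j) (dop (a,j) (dop (b,i) v)))"
    for a b
    by (simp add: dop_xop xop_dop_linear)
  then show ?thesis
    by (simp add: Eop_def normal_quartic_def xop_dop_linear sum_subtractf)
qed

lemma Omega_eq_normal_quartic:
  assumes "i \<noteq> j"
  shows "Omega i j v = normal_quartic i j v"
proof -
  have "xop (a,i) (dop (b,i) (xop (b,j) (dop (a,j) v))) = xop (a,i) (xop (b,j) (dop (a,j) (dop (b,i) v)))"
    for a b
    using assms by (simp add: dop_xop dop_anticommute[of "(b,i)" "(a,j)"] xop_dop_linear)
  then show ?thesis
    by (simp add: Omega_def normal_quartic_def)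
qed

lemma normal_quartic_swap:
  assumes "i \<noteq> j"
  shows "normal_quartic j i v = normal_quartic i j v"
proof -
  have "xop (b,j) (xop (a,i) (dop (b,i) (dop (a,j) v))) = xop (a,i) (xop (b,j) (dop (a,j) (dop (b,i) v)))"
    for a b
    using assms
    by (simp add: xop_anticommute[of "(b,j)" "(a,i)"] dop_anticommute[of "(b,i)" "(a,j)"] xop_dop_linear)
  then show ?thesis
    unfolding normal_quartic_def by (subst sum.swap) simp
qed

lemma kappa_eq_normal_quartic:
  assumes "i \<noteq> j"
  shows "kappa i j v = Eop i i v + Eop j j v - (normal_quartic i j v + normal_quartic i j v)"
  using normal_quartic_swap[OF assms, of v] by (simp add: kappa_def Eop_Eop_normal_quartic)

lemma kappa_Mwt_Omega:
  assumes "v \<in> Mwt \<alpha> \<beta>" "i \<noteq> j"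
  shows "kappa i j v = (\<beta> i + \<beta> j) *s v - 2 *s Omega i j v"
  using assms by (simp add: kappa_eq_normal_quartic Omega_eq_normal_quartic Mwt_def vec_eq_iff algebra_simps)

lemma kappa_Mwt_Eop:
  assumes "v \<in> Mwt \<alpha> \<beta>" "i \<noteq> j"
  shows "kappa i j v = (\<beta> i - \<beta> j) *s v + 2 *s Eop j i (Eop i j v)"
  using assms by (simp add: kappa_eq_normal_quartic Eop_Eop_normal_quartic normal_quartic_swap Mwt_def vec_eq_iff algebra_simps)

abbreviation increasing_pairs :: "('n::linorder \<times> 'n) set" where
  "increasing_pairs \<equiv> {p. fst p < snd p}"

lemma omegaKappa_smult: "omegaKappa \<h> k z (c *s v) = c *s omegaKappa \<h> k z v"
  by (simp add: omegaKappa_def kappa_smult vec_eq_iff sum_component case_prod_unfold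
      sum_distrib_left algebra_simps)

lemma omegaKappa_Mwt_omegaKZ:
  assumes "v \<in> Mwt \<alpha> \<beta>"
  shows "omegaKappa \<h> k z v + (\<Sum>(i,j)\<in>increasing_pairs. - (\<beta> i + \<beta> j) * \<h> / 2 * dlogc k i j z) *s v
    = omegaKZ \<h> k z v"
proof -
  have "omegaKappa \<h> k z v
      = (\<h> / 2) *s (\<Sum>(i,j)\<in>increasing_pairs. dlogc k i j z *s ((\<beta> i + \<beta> j) *s v - 2 *s Omega i j v))"
    unfolding omegaKappa_def using kappa_Mwt_Omega[OF assms]
    by (intro arg_cong[where f = "\<lambda>x. (\<h> / 2) *s x"] sum.cong) auto
  then show ?thesis
    by (simp add: omegaKZ_def vec_eq_iff sum_component case_prod_unfold sum_distrib_left
        sum_distrib_right flip: sum.distrib) (simp add: field_simps sum_negf)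
qed

lemma omegaKappa_Mwt_omegaDyn:
  assumes "v \<in> Mwt \<alpha> \<beta>"
  shows "omegaKappa \<h> k z v + (\<Sum>(i,j)\<in>increasing_pairs. - \<h> / 2 * (\<beta> i - \<beta> j) * dlogc k i j z) *s v
    = omegaDyn \<h> k z v"
proof -
  have "omegaKappa \<h> k z v
      = (\<h> / 2) *s (\<Sum>(i,j)\<in>increasing_pairs. dlogc k i j z *s ((\<beta> i - \<beta> j) *s v + 2 *s Eop j i (Eop i j v)))"
    unfolding omegaKappa_def using kappa_Mwt_Eop[OF assms]
    by (intro arg_cong[where f = "\<lambda>x. (\<h> / 2) *s x"] sum.cong) auto
  then show ?thesis
    by (simp add: omegaDyn_def vec_eq_iff sum_component case_prod_unfold sum_distrib_left
        sum_distrib_right flip: sum.distrib) (simp add: field_simps)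
qed

section \<open>Gauge transformations by products of logarithms\<close>

lemma norm_vector_smult: "norm (c *s v) = norm c * norm (v :: 'a::real_normed_field ^ 'k)"
  unfolding norm_vec_def by (simp add: norm_mult L2_set_right_distrib)

lemma bounded_bilinear_vector_smult:
  "bounded_bilinear (\<lambda>(c::'a::real_normed_field) (v::'a ^ 'k). c *s v)"
proof
  fix a a' :: 'a and b b' :: "'a ^ 'k" and r :: real
  show "(a + a') *s b = a *s b + a' *s b" by (rule vector_sadd_rdistrib)
  show "a *s (b + b') = a *s b + a *s b'" by (rule vector_add_ldistrib)
  show "(r *\<^sub>R a) *s b = r *\<^sub>R (a *s b)" "a *s (r *\<^sub>R b) = r *\<^sub>R (a *s b)"
    by (simp_all add: vec_eq_iff)
  show "\<exists>K. \<forall>(a::'a) (b::'a ^ 'k). norm (a *s b) \<le> norm a * norm b * K"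
    by (rule exI[of _ 1]) (simp add: norm_vector_smult)
qed

lemma has_derivative_vector_smult:
  fixes \<phi> :: "'v::real_normed_vector \<Rightarrow> 'a::real_normed_field" and s :: "'v \<Rightarrow> 'a ^ 'k"
  assumes "(\<phi> has_derivative \<phi>') (at z)" "(s has_derivative s') (at z)"
  shows "((\<lambda>w. \<phi> w *s s w) has_derivative (\<lambda>h. \<phi> z *s s' h + \<phi>' h *s s z)) (at z)"
  using bounded_bilinear.FDERIV[OF bounded_bilinear_vector_smult assms] by simp

lemma continuous_logs_eq_near:
  fixes F G :: "'v::real_normed_vector \<Rightarrow> complex"
  assumes "isCont F z" "isCont G z" "F z = G z" "\<And>w. w \<in> D \<Longrightarrow> exp (F w) = exp (G w)"
  shows "\<exists>d>0. \<forall>w\<in>ball z d \<inter> D. F w = G w"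
proof -
  have "isCont (\<lambda>w. F w - G w) z"
    using assms(1,2) by (intro continuous_intros)
  then obtain d where d: "d > 0" "\<And>w. dist w z < d \<Longrightarrow> norm (F w - G w) < 2 * pi"
    using assms(3) unfolding continuous_at_eps_delta
    by (metis (no_types, lifting) diff_self dist_norm diff_zero pi_gt_zero mult_pos_pos zero_less_numeral)
  have "F w = G w" if w: "w \<in> ball z d \<inter> D" for w
  proof -
    obtain n :: int where n: "F w = G w + (of_int (2 * n) * pi) * \<i>"
      using assms(4) w exp_eq by blast
    have "norm (F w - G w) < 2 * pi"
      using d(2) w by (simp add: dist_commute)
    then have "\<bar>2 * real_of_int n\<bar> < 2"
      using n by (simp add: norm_mult)
    then show ?thesis
      using n by simp
  qed
  with d(1) show ?thesis
    by blast
qed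

lemma has_derivative_continuous_log:
  fixes Lg :: "'v::real_normed_vector \<Rightarrow> complex"
  assumes D: "open D" "z \<in> D" and cont: "continuous_on D Lg"
    and exp_Lg: "\<And>w. w \<in> D \<Longrightarrow> exp (Lg w) = g w"
    and g: "(g has_derivative g') (at z)"
  shows "(Lg has_derivative (\<lambda>h. g' h / g z)) (at z)"
proof -
  have gz: "g z \<noteq> 0"
    using exp_Lg[OF D(2)] by (metis exp_not_eq_zero)
  define G where "G w = Lg z + Ln (g w / g z)" for w
  have "((\<lambda>w. g w / g z) has_derivative (\<lambda>h. g' h / g z)) (at z)"
    using has_derivative_divide[OF g has_derivative_const, of "g z"] gz by simp
  moreover have "(Ln has_derivative (*) 1) (at (g z / g z))"
    using has_field_derivative_Ln[of 1] gz by (simp add: has_field_derivative_def)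
  ultimately have dG: "(G has_derivative (\<lambda>h. g' h / g z)) (at z)"
    unfolding G_def using has_derivative_add[OF has_derivative_const has_derivative_compose] by fastforce
  have "exp (G w) = exp (Lg w)" if "w \<in> D" for w
  proof -
    have "g w \<noteq> 0"
      using that exp_Lg[of w] by (metis exp_not_eq_zero)
    then show ?thesis
      using that gz exp_Lg[OF D(2)] exp_Lg[of w] by (simp add: G_def exp_add)
  qed
  moreover have "isCont G z" "isCont Lg z" "G z = Lg z"
    using has_derivative_continuous[OF dG] cont D gz continuous_on_eq_continuous_at
    by (auto simp: G_def)
  ultimately obtain d where "d > 0" "\<forall>w\<in>ball z d \<inter> D. G w = Lg w"
    using continuous_logs_eq_near[where F = G and G = Lg] by blast
  then show ?thesis
    using has_derivative_transform_within_open[OF dG, of "ball z d \<inter> D"] D by auto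
qed

lemma cov_deriv_scale:
  fixes \<phi> :: "complex ^ 'n \<Rightarrow> complex" and s :: "complex ^ 'n \<Rightarrow> complex ^ 'k"
  assumes "(\<phi> has_derivative \<phi>') (at z)" "(s has_derivative s') (at z)"
    and "\<And>c v. \<omega> k z (c *s v) = c *s \<omega> k z v"
  shows "cov_deriv \<omega> (\<lambda>w. \<phi> w *s s w) z k = \<phi> z *s cov_deriv \<omega> s z k + \<phi>' (axis k 1) *s s z"
  using frechet_derivative_at[OF has_derivative_vector_smult[OF assms(1,2)], symmetric]
    frechet_derivative_at[OF assms(2), symmetric] assms(3)
  by (simp add: cov_deriv_def vector_add_ldistrib)

lemma has_derivative_exp_sum_log:
  fixes L :: "'n \<Rightarrow> 'n \<Rightarrow> complex ^ 'n::{finite,linorder} \<Rightarrow> complex"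
  assumes "open D" "z \<in> D"
    and L: "\<And>i j. i < j \<Longrightarrow> continuous_on D (L i j) \<and> (\<forall>w\<in>D. exp (L i j w) = w $ i - w $ j)"
  shows "((\<lambda>w. exp (\<Sum>(i,j)\<in>increasing_pairs. \<gamma> i j * L i j w)) has_derivative
      (\<lambda>h. exp (\<Sum>(i,j)\<in>increasing_pairs. \<gamma> i j * L i j z)
          * (\<Sum>(i,j)\<in>increasing_pairs. \<gamma> i j * ((h $ i - h $ j) / (z $ i - z $ j))))) (at z)"
proof -
  have dL: "(L i j has_derivative (\<lambda>h. (h $ i - h $ j) / (z $ i - z $ j))) (at z)" if "i < j" for i j
  proof (rule has_derivative_continuous_log[OF assms(1,2)])
    show "continuous_on D (L i j)" "\<And>w. w \<in> D \<Longrightarrow> exp (L i j w) = w $ i - w $ j"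
      using L[OF that] by auto
    show "((\<lambda>w. w $ i - w $ j) has_derivative (\<lambda>h. h $ i - h $ j)) (at z)"
      by (intro has_derivative_diff bounded_linear_imp_has_derivative bounded_linear_vec_nth)
  qed
  have "((\<lambda>w. \<Sum>p\<in>increasing_pairs. \<gamma> (fst p) (snd p) * L (fst p) (snd p) w) has_derivative
      (\<lambda>h. \<Sum>p\<in>increasing_pairs. \<gamma> (fst p) (snd p) * ((h $ fst p - h $ snd p) / (z $ fst p - z $ snd p)))) (at z)"
    using dL by (intro has_derivative_sum has_derivative_mult_right) auto
  moreover have "(exp has_derivative (*) (exp x)) (at x)" for x :: complex
    using DERIV_exp unfolding has_field_derivative_def .
  ultimately show ?thesis
    unfolding case_prod_unfold by (rule has_derivative_compose)
qed

lemma cov_deriv_gauge: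
  fixes L :: "'n \<Rightarrow> 'n \<Rightarrow> complex ^ 'n::{finite,linorder} \<Rightarrow> complex"
    and s :: "complex ^ 'n::{finite,linorder} \<Rightarrow> complex ^ 'k"
  assumes "open D" "z \<in> D"
    and "\<And>i j. i < j \<Longrightarrow> continuous_on D (L i j) \<and> (\<forall>w\<in>D. exp (L i j w) = w $ i - w $ j)"
    and "holo_on D s" and "\<And>c v. \<omega> k z (c *s v) = c *s \<omega> k z v"
    and shift: "\<omega> k z (s z) + (\<Sum>(i,j)\<in>increasing_pairs. \<gamma> i j * dlogc k i j z) *s s z = \<omega>' k z (s z)"
  shows "cov_deriv \<omega> (\<lambda>w. exp (\<Sum>(i,j)\<in>increasing_pairs. \<gamma> i j * L i j w) *s s w) z k
    = exp (\<Sum>(i,j)\<in>increasing_pairs. \<gamma> i j * L i j z) *s cov_deriv \<omega>' s z k"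
proof -
  from assms(1-3) have \<phi>': "((\<lambda>w. exp (\<Sum>(i,j)\<in>increasing_pairs. \<gamma> i j * L i j w)) has_derivative
      (\<lambda>h. exp (\<Sum>(i,j)\<in>increasing_pairs. \<gamma> i j * L i j z)
          * (\<Sum>(i,j)\<in>increasing_pairs. \<gamma> i j * ((h $ i - h $ j) / (z $ i - z $ j))))) (at z)"
    by (rule has_derivative_exp_sum_log)
  obtain s' where s': "(s has_derivative s') (at z)"
    using assms(2,4) unfolding holo_on_def by blast
  have "(axis k 1 $ i - axis k 1 $ j) / (z $ i - z $ j) = dlogc k i j z" for i j
    by (simp add: axis_def dlogc_def)
  then have "cov_deriv \<omega> (\<lambda>w. exp (\<Sum>(i,j)\<in>increasing_pairs. \<gamma> i j * L i j w) *s s w) z k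
    = exp (\<Sum>(i,j)\<in>increasing_pairs. \<gamma> i j * L i j z)
        *s (cov_deriv \<omega> s z k + (\<Sum>(i,j)\<in>increasing_pairs. \<gamma> i j * dlogc k i j z) *s s z)"
    using cov_deriv_scale[where \<omega> = \<omega> and k = k, OF \<phi>' s' assms(5)]
    by (simp add: vector_add_ldistrib vector_smult_assoc)
  also have "cov_deriv \<omega> s z k + (\<Sum>(i,j)\<in>increasing_pairs. \<gamma> i j * dlogc k i j z) *s s z
      = cov_deriv \<omega>' s z k"
    by (simp only: cov_deriv_def add.assoc shift)
  finally show ?thesis .
qed

theorem theorem3p3:
  fixes m n :: nat
    and \<alpha> :: "'a::{finite,linorder} \<Rightarrow> complex"
    and \<beta> :: "'n::{finite,linorder} \<Rightarrow> complex"
    and \<h> :: complex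
    and D :: "(complex ^ 'n::{finite,linorder}) set"
    and L :: "'n \<Rightarrow> 'n \<Rightarrow> complex ^ 'n::{finite,linorder} \<Rightarrow> complex"
    and f :: "complex ^ 'n::{finite,linorder} \<Rightarrow> ('a::{finite,linorder}, 'n::{finite,linorder}) ext"
  assumes "0 < m" and "0 < n" and "CARD('n) = m + n"
    and "open D" and "D \<subseteq> Uconf"
    and "\<And>i j. i < j \<Longrightarrow> continuous_on D (L i j) \<and> (\<forall>z\<in>D. exp (L i j z) = z $ i - z $ j)"
    and "holo_on D f" and "\<forall>z\<in>D. f z \<in> Mwt \<alpha> \<beta>"
  shows "(flat_on D (omegaKZ \<h>) f \<longleftrightarrow>
            flat_on D (omegaKappa \<h>)
              (\<lambda>z. (\<Prod>(i,j)\<in>{p. fst p < snd p}. exp (- (\<beta> i + \<beta> j) * \<h> / 2 * L i j z)) *s f z))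
      \<and> (\<forall>s. holo_on D s \<longrightarrow> (\<forall>z\<in>D. s z \<in> Mwt \<alpha> \<beta>) \<longrightarrow>
           (\<forall>z\<in>D. \<forall>k.
              (let hh = (\<lambda>w. exp (\<h> / 2 * (\<Sum>(i,j)\<in>{p. fst p < snd p}. (\<beta> i - \<beta> j) * L i j w)))
               in hh z *s cov_deriv (omegaKappa \<h>) (\<lambda>w. inverse (hh w) *s s w) z k)
              = cov_deriv (omegaDyn \<h>) s z k))"
proof -
  define hh where "hh w = exp (\<h> / 2 * (\<Sum>(i,j)\<in>increasing_pairs. (\<beta> i - \<beta> j) * L i j w))" for w
  have inverse_hh: "inverse (hh w) = exp (\<Sum>(i,j)\<in>increasing_pairs. - \<h> / 2 * (\<beta> i - \<beta> j) * L i j w)" for w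
    by (simp add: hh_def exp_minus[symmetric] sum_distrib_left sum_negf case_prod_unfold mult.assoc)
  have KZ: "cov_deriv (omegaKappa \<h>)
      (\<lambda>w. exp (\<Sum>(i,j)\<in>increasing_pairs. - (\<beta> i + \<beta> j) * \<h> / 2 * L i j w) *s f w) z k
    = exp (\<Sum>(i,j)\<in>increasing_pairs. - (\<beta> i + \<beta> j) * \<h> / 2 * L i j z) *s cov_deriv (omegaKZ \<h>) f z k"
    if "z \<in> D" for z k
    using assms(4,6-8) that omegaKappa_smult omegaKappa_Mwt_omegaKZ[of "f z" \<alpha> \<beta>]
    by (intro cov_deriv_gauge) auto
  have Dyn: "cov_deriv (omegaKappa \<h>) (\<lambda>w. inverse (hh w) *s s w) z k
    = inverse (hh z) *s cov_deriv (omegaDyn \<h>) s z k"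
    if "holo_on D s" "\<forall>z\<in>D. s z \<in> Mwt \<alpha> \<beta>" "z \<in> D" for s z k
    unfolding inverse_hh
    using assms(4,6) that omegaKappa_smult omegaKappa_Mwt_omegaDyn[of "s z" \<alpha> \<beta>]
    by (intro cov_deriv_gauge) auto
  have "(\<Prod>(i,j)\<in>increasing_pairs. exp (- (\<beta> i + \<beta> j) * \<h> / 2 * L i j z))
      = exp (\<Sum>(i,j)\<in>increasing_pairs. - (\<beta> i + \<beta> j) * \<h> / 2 * L i j z)" for z
    by (simp add: exp_sum case_prod_unfold)
  moreover have "hh z \<noteq> 0" for z
    by (simp add: hh_def)
  ultimately show ?thesis
    using KZ Dyn unfolding Let_def hh_def[symmetric]
    by (simp add: flat_on_def vector_smult_assoc)
qed

end
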